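(* Let $n\ge1$ and $A\in\mathbb{R}^{n\times n}$. (i) If $A=B+C$ for some weakly algebraically independent $B,C\in\mathbb{R}^{n\times n}$, then $A$ is transcendental. (ii) If $A$ is not weakly algebraic, then there exist weakly algebraically independent $B,C\in\mathscr{L}_{n,n}$ with $B+C=A$.
   Context: Polynomials in several non-commuting variables with integer coefficients ($\mathbb{Z}\langle X_0,\ldots,X_\ell\rangle$) are evaluated at real $n\times n$ matrices by substitution (constant term times $I_n$). $A$ is algebraic if $P(A)=\mathbf{0}$ for some nonzero $P\in\mathbb{Z}[X]$, and transcendental otherwise. $A$ is weakly algebraic if there exist an integer $\ell\ge0$ and $P\in\mathbb{Z}\langle X_0,\ldots,X_\ell\rangle$ such that $P(A,B_1,\ldots,B_\ell)=\mathbf{0}$ for all $B_1,\ldots,B_\ell\in\mathbb{R}^{n\times n}$, but $P(C_0,\ldots,C_\ell)\ne\mathbf{0}$ for some $C_0,\ldots,C_\ell\in\mathbb{R}^{n\times n}$. $B,C$ are weakly algebraically independent if every $P\in\mathbb{Z}\langle X,Y\rangle$ with $P(B,C)=\mathbf{0}$ satisfies $P(C_0,C_1)=\mathbf{0}$ for all $C_0,C_1\in\mathbb{R}^{n\times n}$. $\Vert\cdot\Vert$ is the supremum norm; a real $m\times n$ matrix $A$ is a Liouville matrix if $A\mathbf{q}-\mathbf{p}\neq\mathbf{0}$ for all nonzero $(\mathbf{q},\mathbf{p})\in\mathbb{Z}^n\times\mathbb{Z}^m$ and for every $N$ there exist $\mathbf{p}\in\mathbb{Z}^m$, $\mathbf{q}\in\mathbb{Z}^n\setminus\{\mathbf{0}\}$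 with $\Vert A\mathbf{q}-\mathbf{p}\Vert<\Vert\mathbf{q}\Vert^{-N}$; $\mathscr{L}_{m,n}$ is the set of these. *)

theory Defs
  imports "HOL-Analysis.Analysis" "HOL-Computational_Algebra.Polynomial"
begin

text \<open>Non-commutative polynomials with integer coefficients, represented as
  expressions (every such polynomial is denoted by some expression and vice versa).\<close>

datatype ncpoly = NVar nat | NConst int | NAdd ncpoly ncpoly | NMul ncpoly ncpoly

fun ncvars :: "ncpoly \<Rightarrow> nat set" where
  "ncvars (NVar i) = {i}"
| "ncvars (NConst c) = {}"
| "ncvars (NAdd p q) = ncvars p \<union> ncvars q"
| "ncvars (NMul p q) = ncvars p \<union> ncvars q"

fun nceval :: "(nat \<Rightarrow> real^'n^'n) \<Rightarrow> ncpoly \<Rightarrow> real^'n^'n" where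
  "nceval \<sigma> (NVar i) = \<sigma> i"
| "nceval \<sigma> (NConst c) = of_int c *\<^sub>R mat 1"
| "nceval \<sigma> (NAdd p q) = nceval \<sigma> p + nceval \<sigma> q"
| "nceval \<sigma> (NMul p q) = nceval \<sigma> p ** nceval \<sigma> q"

fun matpow :: "real^'n^'n \<Rightarrow> nat \<Rightarrow> real^'n^'n" where
  "matpow A 0 = mat 1"
| "matpow A (Suc k) = A ** matpow A k"

definition poly_mat :: "int poly \<Rightarrow> real^'n^'n \<Rightarrow> real^'n^'n" where
  "poly_mat P A = (\<Sum>i\<le>degree P. of_int (coeff P i) *\<^sub>R matpow A i)"

definition algebraic_mat :: "real^'n^'n \<Rightarrow> bool" where
  "algebraic_mat A \<longleftrightarrow> (\<exists>P. P \<noteq> 0 \<and> poly_mat P A = 0)"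

definition transcendental_mat :: "real^'n^'n \<Rightarrow> bool" where
  "transcendental_mat A \<longleftrightarrow> \<not> algebraic_mat A"

definition weakly_algebraic :: "real^'n^'n \<Rightarrow> bool" where
  "weakly_algebraic A \<longleftrightarrow>
     (\<exists>(l::nat) P. ncvars P \<subseteq> {..l} \<and>
        (\<forall>\<sigma>::nat \<Rightarrow> real^'n^'n. \<sigma> 0 = A \<longrightarrow> nceval \<sigma> P = 0) \<and>
        (\<exists>\<sigma>::nat \<Rightarrow> real^'n^'n. nceval \<sigma> P \<noteq> 0))"

definition weakly_alg_indep :: "real^'n^'n \<Rightarrow> real^'n^'n \<Rightarrow> bool" where
  "weakly_alg_indep B C \<longleftrightarrow>
     (\<forall>P. ncvars P \<subseteq> {0, 1} \<longrightarrow>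
        nceval ((\<lambda>_. 0)(0 := B, 1 := C)) P = 0 \<longrightarrow>
        (\<forall>C0 C1. nceval ((\<lambda>_. 0)(0 := C0, 1 := C1)) P = (0::real^'n^'n)))"

definition supnorm :: "real^'k \<Rightarrow> real" where
  "supnorm x = Max (range (\<lambda>i. \<bar>x $ i\<bar>))"

definition int_vec :: "real^'k \<Rightarrow> bool" where
  "int_vec x \<longleftrightarrow> (\<forall>i. x $ i \<in> \<int>)"

definition liouville_mat :: "real^'n^'m \<Rightarrow> bool" where
  "liouville_mat A \<longleftrightarrow>
     (\<forall>q p. int_vec q \<and> int_vec p \<and> (q \<noteq> 0 \<or> p \<noteq> 0) \<longrightarrow> A *v q - p \<noteq> 0) \<and>
     (\<forall>N::nat. \<exists>p q. int_vec p \<and> int_vec q \<and> q \<noteq> 0 \<and>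
        supnorm (A *v q - p) < inverse (supnorm q ^ N))"

end

theory Submission
  imports Defs
begin

text \<open>
  (i) A relation \<open>P(A) = 0\<close> with \<open>P \<in> \<int>[X]\<close> is a non-commutative relation
  \<open>P(X\<^sub>0 + X\<^sub>1)\<close> between \<open>B\<close> and \<open>C\<close>. Weak independence makes it vanish at every pair,
  in particular at \<open>(c I, 0)\<close>, so every real \<open>c\<close> is a root of \<open>P\<close> and \<open>P = 0\<close>.

  (ii) Baire category in \<open>\<real>\<^sup>n\<^sup>\<times>\<^sup>n\<close>. The Liouville matrices are the intersection of
  countably many dense open sets, and so are their reflections \<open>B \<mapsto> A - B\<close>. For every
  non-commutative \<open>P\<close> in two variables that does not vanish identically, the set of \<open>B\<close>
  with \<open>P(B, A - B) \<noteq> 0\<close> is open; it is dense because along any line the entries of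
  \<open>P(B, A - B)\<close> are polynomials, so vanishing on a ball would force vanishing everywhere,
  i.e. a weakly algebraic relation for \<open>A\<close>. Any \<open>B\<close> in the intersection of all these
  sets gives the decomposition \<open>A = B + (A - B)\<close>.
\<close>

section \<open>Non-commutative polynomials\<close>

lemma nceval_cong:
  "(\<And>i. i \<in> ncvars P \<Longrightarrow> \<sigma> i = \<tau> i) \<Longrightarrow> nceval \<sigma> P = nceval \<tau> P"
  by (induction P) auto

fun ncsubst :: "(nat \<Rightarrow> ncpoly) \<Rightarrow> ncpoly \<Rightarrow> ncpoly" where
  "ncsubst \<tau> (NVar i) = \<tau> i"
| "ncsubst \<tau> (NConst c) = NConst c"
| "ncsubst \<tau> (NAdd p q) = NAdd (ncsubst \<tau> p) (ncsubst \<tau> q)"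
| "ncsubst \<tau> (NMul p q) = NMul (ncsubst \<tau> p) (ncsubst \<tau> q)"

lemma nceval_ncsubst: "nceval \<sigma> (ncsubst \<tau> P) = nceval (\<lambda>i. nceval \<sigma> (\<tau> i)) P"
  by (induction P) auto

lemma ncvars_ncsubst: "ncvars (ncsubst \<tau> P) = (\<Union>i\<in>ncvars P. ncvars (\<tau> i))"
  by (induction P) auto

definition ncdiff :: "ncpoly \<Rightarrow> ncpoly \<Rightarrow> ncpoly" where
  "ncdiff p q = NAdd p (NMul (NConst (-1)) q)"

lemma nceval_ncdiff: "nceval \<sigma> (ncdiff p q) = nceval \<sigma> p - nceval \<sigma> q"
proof -
  have "(of_int (-1) *\<^sub>R mat 1 :: real^'n^'n) ** X = - X" for X
    by (simp only: scalar_matrix_assoc[symmetric] matrix_mul_lid) simp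
  then show ?thesis
    by (simp add: ncdiff_def)
qed

lemma ncvars_ncdiff: "ncvars (ncdiff p q) = ncvars p \<union> ncvars q"
  by (simp add: ncdiff_def)

fun ncpow :: "ncpoly \<Rightarrow> nat \<Rightarrow> ncpoly" where
  "ncpow e 0 = NConst 1"
| "ncpow e (Suc k) = NMul e (ncpow e k)"

lemma nceval_ncpow: "nceval \<sigma> (ncpow e k) = matpow (nceval \<sigma> e) k"
  by (induction k) auto

lemma ncvars_ncpow: "ncvars (ncpow e k) \<subseteq> ncvars e"
  by (induction k) auto

fun nc_poly_comp :: "int poly \<Rightarrow> ncpoly \<Rightarrow> nat \<Rightarrow> ncpoly" where
  "nc_poly_comp P e 0 = NConst 0"
| "nc_poly_comp P e (Suc k) = NAdd (nc_poly_comp P e k) (NMul (NConst (coeff P k)) (ncpow e k))"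

lemma nceval_nc_poly_comp:
  "nceval \<sigma> (nc_poly_comp P e k) = (\<Sum>i<k. of_int (coeff P i) *\<^sub>R matpow (nceval \<sigma> e) i)"
  by (induction k) (simp_all add: nceval_ncpow scalar_matrix_assoc[symmetric])

lemma nceval_nc_poly_comp_degree:
  "nceval \<sigma> (nc_poly_comp P e (Suc (degree P))) = poly_mat P (nceval \<sigma> e)"
  by (simp only: nceval_nc_poly_comp poly_mat_def lessThan_Suc_atMost)

lemma ncvars_nc_poly_comp: "ncvars (nc_poly_comp P e k) \<subseteq> ncvars e"
  using ncvars_ncpow by (induction k) auto

section \<open>Sums of weakly algebraically independent matrices\<close>

lemma matpow_scalar_mat: "matpow (c *\<^sub>R mat 1 :: real^'n^'n) i = (c ^ i) *\<^sub>R mat 1"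
  by (induction i) (auto simp: scalar_matrix_assoc[symmetric] matrix_scalar_ac)

lemma poly_mat_scalar_mat:
  "poly_mat P (c *\<^sub>R mat 1 :: real^'n^'n) = poly (map_poly real_of_int P) c *\<^sub>R mat 1"
proof -
  have "poly (map_poly real_of_int P) c = (\<Sum>i\<le>degree P. of_int (coeff P i) * c ^ i)"
    by (simp add: poly_altdef degree_map_poly coeff_map_poly)
  then show ?thesis
    by (simp add: poly_mat_def matpow_scalar_mat scaleR_sum_left)
qed

lemma poly_mat_sum_eq_0_imp_eq_0:
  fixes B C :: "real^'n^'n"
  assumes indep: "weakly_alg_indep B C" and P: "poly_mat P (B + C) = 0"
  shows "P = 0"
proof -
  define Q where "Q = nc_poly_comp P (NAdd (NVar 0) (NVar 1)) (Suc (degree P))"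
  have Q_eval: "nceval ((\<lambda>_. 0)(0 := X, 1 := Y)) Q = poly_mat P (X + Y)" for X Y :: "real^'n^'n"
    unfolding Q_def nceval_nc_poly_comp_degree by simp
  have "ncvars Q \<subseteq> ncvars (NAdd (NVar 0) (NVar 1))"
    unfolding Q_def by (rule ncvars_nc_poly_comp)
  then have "ncvars Q \<subseteq> {0, 1}" by auto
  moreover have "nceval ((\<lambda>_. 0)(0 := B, 1 := C)) Q = 0"
    using P Q_eval[of B C] by simp
  ultimately have "nceval ((\<lambda>_. 0)(0 := X, 1 := Y)) Q = (0::real^'n^'n)" for X Y
    using indep unfolding weakly_alg_indep_def by blast
  then have "poly (map_poly real_of_int P) c *\<^sub>R (mat 1 :: real^'n^'n) = 0" for c
    using Q_eval[of "c *\<^sub>R mat 1" 0] by (simp add: poly_mat_scalar_mat)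
  moreover have "(mat 1 :: real^'n^'n) \<noteq> 0"
    by (simp add: vec_eq_iff mat_def)
  ultimately have "map_poly real_of_int P = 0"
    using poly_all_0_iff_0 by auto
  then show "P = 0"
    by (simp add: map_poly_eq_0_iff)
qed

theorem transcendental_mat_sum_weakly_alg_indep:
  "weakly_alg_indep B C \<Longrightarrow> transcendental_mat (B + C)"
  using poly_mat_sum_eq_0_imp_eq_0
  unfolding transcendental_mat_def algebraic_mat_def by blast

section \<open>Polynomial relations along the decompositions \<open>A = B + (A - B)\<close>\<close>

lemma continuous_on_matrix_mult:
  fixes f g :: "'a::topological_space \<Rightarrow> real^'n^'n"
  assumes "continuous_on S f" "continuous_on S g"
  shows "continuous_on S (\<lambda>x. f x ** g x)"
  unfolding matrix_matrix_mult_def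
  by (intro continuous_on_vec_lambda continuous_intros assms)

lemma continuous_on_nceval:
  fixes \<sigma> :: "'a::topological_space \<Rightarrow> nat \<Rightarrow> real^'n^'n"
  assumes "\<And>i. continuous_on S (\<lambda>x. \<sigma> x i)"
  shows "continuous_on S (\<lambda>x. nceval (\<sigma> x) P)"
  by (induction P) (auto intro!: continuous_intros continuous_on_matrix_mult assms)

lemma nceval_line_polynomial:
  fixes M N :: "nat \<Rightarrow> real^'n^'n"
  shows "\<exists>Q. \<forall>t i j. nceval (\<lambda>k. M k + t *\<^sub>R N k) P $ i $ j = poly (Q i j) t"
proof (induction P)
  case (NVar k)
  show ?case by (rule exI[of _ "\<lambda>i j. [:M k $ i $ j, N k $ i $ j:]"]) auto
next
  case (NConst c)
  show ?case by (rule exI[of _ "\<lambda>i j. [:of_int c * mat 1 $ i $ j:]"]) auto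
next
  case (NAdd p q)
  then obtain Q1 Q2 where "\<forall>t i j. nceval (\<lambda>k. M k + t *\<^sub>R N k) p $ i $ j = poly (Q1 i j) t"
    "\<forall>t i j. nceval (\<lambda>k. M k + t *\<^sub>R N k) q $ i $ j = poly (Q2 i j) t" by blast
  then show ?case by (intro exI[of _ "\<lambda>i j. Q1 i j + Q2 i j"]) auto
next
  case (NMul p q)
  then obtain Q1 Q2 where "\<forall>t i j. nceval (\<lambda>k. M k + t *\<^sub>R N k) p $ i $ j = poly (Q1 i j) t"
    "\<forall>t i j. nceval (\<lambda>k. M k + t *\<^sub>R N k) q $ i $ j = poly (Q2 i j) t" by blast
  then show ?case
    by (intro exI[of _ "\<lambda>i j. \<Sum>k\<in>UNIV. Q1 i k * Q2 k j"])
       (auto simp: matrix_matrix_mult_def poly_sum)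
qed

lemma nceval_line_eq_0:
  fixes M N :: "nat \<Rightarrow> real^'n^'n"
  assumes "infinite T" and "\<And>t. t \<in> T \<Longrightarrow> nceval (\<lambda>k. M k + t *\<^sub>R N k) P = 0"
  shows "nceval (\<lambda>k. M k + t *\<^sub>R N k) P = 0"
proof -
  obtain Q where Q: "\<And>t i j. nceval (\<lambda>k. M k + t *\<^sub>R N k) P $ i $ j = poly (Q i j) t"
    using nceval_line_polynomial by blast
  have "Q i j = 0" for i j
  proof (rule ccontr)
    assume "Q i j \<noteq> 0"
    then have "finite {t. poly (Q i j) t = 0}" by (rule poly_roots_finite)
    moreover have "T \<subseteq> {t. poly (Q i j) t = 0}"
      using assms(2) Q by (auto simp: vec_eq_iff)
    ultimately show False using assms(1) finite_subset by blast
  qed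
  then show ?thesis by (simp add: vec_eq_iff Q)
qed

definition nceval_split :: "real^'n^'n \<Rightarrow> ncpoly \<Rightarrow> real^'n^'n \<Rightarrow> real^'n^'n" where
  "nceval_split A P B = nceval ((\<lambda>_. 0)(0 := B, 1 := A - B)) P"

lemma continuous_on_nceval_split: "continuous_on S (nceval_split A P)"
  unfolding nceval_split_def
proof (intro continuous_on_nceval)
  fix i
  show "continuous_on S (\<lambda>x. ((\<lambda>_. 0)(0 := x, 1 := A - x)) i)"
    by (cases "i = 0"; cases "i = 1") (auto intro!: continuous_intros)
qed

lemma open_nceval_split_neq_0: "open {B. nceval_split A P B \<noteq> 0}"
  by (rule open_Collect_neq[OF continuous_on_nceval_split continuous_on_const])

lemma nceval_split_eq_0_if_interior:
  fixes A B1 :: "real^'n^'n"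
  assumes "interior {B. nceval_split A P B = 0} \<noteq> {}"
  shows "nceval_split A P B1 = 0"
proof -
  obtain B0 e where "e > 0" and ball: "ball B0 e \<subseteq> {B. nceval_split A P B = 0}"
    using assms by (auto simp: mem_interior)
  define D where "D = B1 - B0"
  define M :: "nat \<Rightarrow> real^'n^'n" where "M = (\<lambda>_. 0)(0 := B0, 1 := A - B0)"
  define N :: "nat \<Rightarrow> real^'n^'n" where "N = (\<lambda>_. 0)(0 := D, 1 := - D)"
  have line: "nceval (\<lambda>k. M k + t *\<^sub>R N k) P = nceval_split A P (B0 + t *\<^sub>R D)" for t
  proof -
    have "(\<lambda>k. M k + t *\<^sub>R N k) = (\<lambda>_. 0)(0 := B0 + t *\<^sub>R D, 1 := A - (B0 + t *\<^sub>R D))"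
      by (rule ext) (simp add: M_def N_def)
    then show ?thesis by (simp add: nceval_split_def)
  qed
  define d where "d = e / (norm D + 1)"
  have "d > 0" using \<open>e > 0\<close> by (simp add: d_def add_nonneg_pos)
  have segment: "B0 + t *\<^sub>R D \<in> ball B0 e" if "t \<in> {-d<..<d}" for t
  proof -
    have "norm (t *\<^sub>R D) \<le> d * norm D" using that by (auto intro: mult_right_mono)
    also have "\<dots> < e"
      using \<open>e > 0\<close> by (simp add: d_def pos_divide_less_eq add_nonneg_pos)
    finally show ?thesis by (simp add: dist_norm)
  qed
  have zero: "nceval (\<lambda>k. M k + t *\<^sub>R N k) P = 0" if "t \<in> {-d<..<d}" for t
    using subsetD[OF ball segment[OF that]] by (simp add: line)
  have "nceval (\<lambda>k. M k + 1 *\<^sub>R N k) P = 0"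
    by (rule nceval_line_eq_0[where T = "{-d<..<d}", OF _ zero]) (simp add: \<open>d > 0\<close>)
  then show ?thesis by (simp only: line) (simp add: D_def)
qed

lemma closure_eq_UNIV_if_interior_Compl_empty: "interior (- S) = {} \<Longrightarrow> closure S = UNIV"
  using interior_complement[of S] by auto

lemma closure_nceval_split_neq_0:
  assumes "nceval_split A P B1 \<noteq> 0"
  shows "closure {B. nceval_split A P B \<noteq> 0} = UNIV"
proof (rule closure_eq_UNIV_if_interior_Compl_empty)
  have "- {B. nceval_split A P B \<noteq> 0} = {B. nceval_split A P B = 0}" by auto
  with assms nceval_split_eq_0_if_interior
  show "interior (- {B. nceval_split A P B \<noteq> 0}) = {}" by metis
qed

text \<open>The substitution \<open>(X\<^sub>0, X\<^sub>1) \<mapsto> (X\<^sub>1, X\<^sub>0 - X\<^sub>1)\<close> turns the relation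
  \<open>P(B, A - B) = 0\<close> into one of the form \<open>Q(A, B) = 0\<close>.\<close>

lemma weakly_algebraic_if_nceval_split_eq_0:
  fixes A C0 C1 :: "real^'n^'n"
  assumes vars: "ncvars P \<subseteq> {0, 1}" and nonzero: "nceval ((\<lambda>_. 0)(0 := C0, 1 := C1)) P \<noteq> 0"
    and vanish: "\<And>B. nceval_split A P B = 0"
  shows "weakly_algebraic A"
proof -
  define \<tau> :: "nat \<Rightarrow> ncpoly"
    where "\<tau> = (\<lambda>_. NVar 0)(0 := NVar 1, 1 := ncdiff (NVar 0) (NVar 1))"
  define Q where "Q = ncsubst \<tau> P"
  have Q_eval: "nceval \<sigma> Q = nceval ((\<lambda>_. 0)(0 := \<sigma> 1, 1 := \<sigma> 0 - \<sigma> 1)) P"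
    for \<sigma> :: "nat \<Rightarrow> real^'n^'n"
    unfolding Q_def nceval_ncsubst
    by (rule nceval_cong) (use vars in \<open>auto simp: \<tau>_def nceval_ncdiff\<close>)
  have "ncvars Q \<subseteq> {..1}"
    using vars by (auto simp: Q_def ncvars_ncsubst \<tau>_def ncvars_ncdiff)
  moreover have "nceval \<sigma> Q = 0" if "\<sigma> 0 = A" for \<sigma>
    using vanish[of "\<sigma> 1"] that by (simp add: Q_eval nceval_split_def)
  moreover have "nceval ((\<lambda>_. 0)(0 := C0 + C1, 1 := C0)) Q \<noteq> 0"
    using nonzero by (simp add: Q_eval)
  ultimately show ?thesis
    unfolding weakly_algebraic_def by blast
qed

section \<open>Liouville matrices form a dense \<open>G\<^sub>\<delta>\<close>\<close>

definition of_int_vec :: "int^'k \<Rightarrow> real^'k" where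
  "of_int_vec z = (\<chi> i. of_int (z $ i))"

lemma int_vec_iff_range_of_int_vec: "int_vec q \<longleftrightarrow> q \<in> range of_int_vec"
proof
  assume "int_vec q"
  then have "\<forall>i. \<exists>z. q $ i = of_int z"
    unfolding int_vec_def by (metis Ints_cases)
  then obtain z where "\<And>i. q $ i = of_int (z i)"
    by metis
  then have "q = of_int_vec (\<chi> i. z i)" by (simp add: of_int_vec_def vec_eq_iff)
  then show "q \<in> range of_int_vec" by blast
qed (auto simp: int_vec_def of_int_vec_def)

lemma countable_int_vec: "countable {q :: real^'k. int_vec q}"
  by (simp add: int_vec_iff_range_of_int_vec Collect_mem_eq)

lemma supnorm_pos:
  assumes "x \<noteq> 0"
  shows "0 < supnorm (x :: real^'k)"
proof -
  obtain i where "x $ i \<noteq> 0"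
    using assms by (auto simp: vec_eq_iff)
  moreover have "\<bar>x $ i\<bar> \<le> supnorm x"
    unfolding supnorm_def by (rule Max_ge) auto
  ultimately show ?thesis by linarith
qed

definition liouville_approx :: "nat \<Rightarrow> (real^'n^'m) set" where
  "liouville_approx N = {B. \<exists>p q. int_vec p \<and> int_vec q \<and> q \<noteq> 0 \<and>
     supnorm (B *v q - p) < inverse (supnorm q ^ N)}"

definition liouville_family :: "(real^'n^'m) set set" where
  "liouville_family = range liouville_approx \<union>
     (\<lambda>(q, p). {B. B *v q - p \<noteq> 0}) ` {(q, p). int_vec q \<and> int_vec p \<and> (q \<noteq> 0 \<or> p \<noteq> 0)}"

lemma liouville_mat_iff_Inter_liouville_family: "liouville_mat B \<longleftrightarrow> B \<in> \<Inter> liouville_family"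
proof -
  have "B \<in> \<Inter> liouville_family \<longleftrightarrow>
      (\<forall>q p. int_vec q \<and> int_vec p \<and> (q \<noteq> 0 \<or> p \<noteq> 0) \<longrightarrow> B *v q - p \<noteq> 0) \<and>
      (\<forall>N. B \<in> liouville_approx N)"
    unfolding liouville_family_def by blast
  then show ?thesis
    unfolding liouville_mat_def liouville_approx_def mem_Collect_eq by (rule sym)
qed

lemma countable_liouville_family: "countable liouville_family"
proof -
  have "{(q, p). int_vec q \<and> int_vec p \<and> (q \<noteq> 0 \<or> p \<noteq> 0)}
      \<subseteq> {q :: real^'n. int_vec q} \<times> {p :: real^'m. int_vec p}"
    by auto
  moreover have "countable ({q :: real^'n. int_vec q} \<times> {p :: real^'m. int_vec p})"
    by (intro countable_SIGMA countable_int_vec)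
  ultimately have
    "countable {(q :: real^'n, p :: real^'m). int_vec q \<and> int_vec p \<and> (q \<noteq> 0 \<or> p \<noteq> 0)}"
    by (rule countable_subset)
  then show ?thesis
    unfolding liouville_family_def by (intro countable_Un countable_image) simp_all
qed

lemma continuous_on_matrix_vector_mult: "continuous_on S (\<lambda>B::real^'n^'m. B *v v)"
  unfolding matrix_vector_mult_def
  by (intro continuous_on_vec_lambda continuous_intros)

lemma open_liouville_approx: "open (liouville_approx N :: (real^'n^'m) set)"
proof -
  have "liouville_approx N = (\<Union>(p, q) \<in> {(p, q). int_vec p \<and> int_vec q \<and> q \<noteq> 0}.
      \<Inter>i. {B::real^'n^'m. \<bar>(B *v q - p) $ i\<bar> < inverse (supnorm q ^ N)})"
    by (auto simp: liouville_approx_def supnorm_def)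
  also have "open \<dots>"
  proof -
    have "open {B::real^'n^'m. \<bar>(B *v q - p) $ i\<bar> < c}" for q p i c
      by (intro open_Collect_less continuous_intros continuous_on_matrix_vector_mult)
    then show ?thesis by (intro open_UN ballI open_INT) auto
  qed
  finally show ?thesis .
qed

lemma round_div_approx:
  fixes c x :: real
  assumes "c > 0"
  shows "\<bar>of_int (round (c * x)) / c - x\<bar> \<le> inverse c"
proof -
  have "of_int (round (c * x)) / c - x = (of_int (round (c * x)) - c * x) / c"
    using assms by (simp add: diff_divide_distrib)
  then have "\<bar>of_int (round (c * x)) / c - x\<bar> = \<bar>of_int (round (c * x)) - c * x\<bar> / c"
    using assms by simp
  also have "\<dots> \<le> (1 / 2) / c"
    using assms of_int_round_abs_le[of "c * x"] by (intro divide_right_mono) auto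
  also have "\<dots> \<le> inverse c"
    using assms by (simp add: field_simps)
  finally show ?thesis .
qed

text \<open>Rounding \<open>k\<close> times one column of \<open>B\<close> to integers moves \<open>B\<close> by at most
  \<open>1/k\<close> per entry and yields a matrix mapping an integer vector exactly to an integer vector.\<close>

lemma closure_liouville_approx: "closure (liouville_approx N :: (real^'n^'m) set) = UNIV"
proof -
  have "B0 \<in> closure (liouville_approx N)" for B0 :: "real^'n^'m"
  proof -
    define j0 :: 'n where "j0 = undefined"
    define c :: "nat \<Rightarrow> real" where "c k = real (Suc k)" for k
    have c: "c k > 0" for k by (simp add: c_def)
    have c_lim: "(\<lambda>k. inverse (c k)) \<longlonglongrightarrow> 0"
      unfolding c_def by (rule LIMSEQ_inverse_real_of_nat)
    define B :: "nat \<Rightarrow> real^'n^'m" where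
      "B k = (\<chi> i j. if j = j0 then of_int (round (c k * B0 $ i $ j)) / c k else B0 $ i $ j)" for k
    have "B k \<in> liouville_approx N" for k
    proof -
      define q :: "real^'n" where "q = (\<chi> j. if j = j0 then c k else 0)"
      define p :: "real^'m" where "p = (\<chi> i. of_int (round (c k * B0 $ i $ j0)))"
      have "q $ j0 \<noteq> 0" using c[of k] by (simp add: q_def)
      then have "q \<noteq> 0" by auto
      have "(B k *v q) $ i = p $ i" for i
      proof -
        have "(B k *v q) $ i = (\<Sum>j\<in>UNIV. B k $ i $ j * q $ j)"
          by (simp add: matrix_vector_mult_def)
        also have "\<dots> = (\<Sum>j\<in>UNIV. if j = j0 then B k $ i $ j0 * c k else 0)"
          by (intro sum.cong) (auto simp: q_def)
        also have "\<dots> = p $ i"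
          using c[of k] by (simp add: B_def p_def)
        finally show ?thesis .
      qed
      then have "B k *v q - p = 0" by (simp add: vec_eq_iff)
      moreover have "supnorm (0 :: real^'m) < inverse (supnorm q ^ N)"
        using supnorm_pos[OF \<open>q \<noteq> 0\<close>] by (simp add: supnorm_def)
      moreover have "int_vec p" "int_vec q"
        by (simp_all add: int_vec_def p_def q_def c_def)
      ultimately show ?thesis
        unfolding liouville_approx_def using \<open>q \<noteq> 0\<close>
        by (intro CollectI exI[of _ p] exI[of _ q]) simp
    qed
    moreover have "B \<longlonglongrightarrow> B0"
    proof (intro vec_tendstoI)
      fix i j
      have "\<bar>B k $ i $ j - B0 $ i $ j\<bar> \<le> inverse (c k)" for k
        using round_div_approx[OF c, of k "B0 $ i $ j"] c[of k] by (auto simp: B_def)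
      then have "(\<lambda>k. B k $ i $ j - B0 $ i $ j) \<longlonglongrightarrow> 0"
        by (intro Lim_null_comparison[OF _ c_lim]) simp
      then show "(\<lambda>k. B k $ i $ j) \<longlonglongrightarrow> B0 $ i $ j"
        by (rule LIM_zero_cancel)
    qed
    ultimately show ?thesis
      unfolding closure_sequential by blast
  qed
  then show ?thesis by blast
qed

text \<open>Moving \<open>B\<close> in the direction of the matrix with all rows equal to \<open>q\<close> changes
  \<open>B *v q\<close> by a multiple of \<open>(q \<bullet> q) (1, \<dots>, 1)\<close>.\<close>

lemma closure_matrix_vector_neq:
  fixes q :: "real^'n" and p :: "real^'m"
  assumes "q \<noteq> 0 \<or> p \<noteq> 0"
  shows "closure {B :: real^'n^'m. B *v q - p \<noteq> 0} = UNIV"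
proof (cases "q = 0")
  case True
  with assms show ?thesis by simp
next
  case False
  define D :: "real^'n^'m" where "D = (\<chi> i j. q $ j)"
  have "D *v q = (\<chi> i. q \<bullet> q)"
    by (simp add: D_def matrix_vector_mult_def inner_vec_def vec_eq_iff)
  then have Dq: "D *v q \<noteq> 0"
    using False by (simp add: vec_eq_iff)
  then have "D \<noteq> 0" by auto
  show ?thesis
  proof (rule closure_eq_UNIV_if_interior_Compl_empty, rule ccontr)
    assume "interior (- {B :: real^'n^'m. B *v q - p \<noteq> 0}) \<noteq> {}"
    then obtain B e where e: "e > 0" and ball: "ball B e \<subseteq> - {B. B *v q - p \<noteq> 0}"
      by (auto simp: mem_interior)
    define t where "t = e / (2 * norm D)"
    have "t > 0" using e \<open>D \<noteq> 0\<close> by (simp add: t_def)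
    have "B \<in> ball B e" "B + t *\<^sub>R D \<in> ball B e"
      using e \<open>D \<noteq> 0\<close> by (auto simp: dist_norm t_def)
    then have "B *v q - p = 0" "(B + t *\<^sub>R D) *v q - p = 0"
      using ball by blast+
    then have "t *\<^sub>R (D *v q) = 0"
      by (simp add: matrix_vector_mult_add_rdistrib scaleR_matrix_vector_assoc[symmetric]
          algebra_simps)
    with \<open>t > 0\<close> Dq show False by simp
  qed
qed

lemma open_dense_liouville_family:
  assumes "S \<in> liouville_family"
  shows "open S \<and> closure (S :: (real^'n^'m) set) = UNIV"
  using assms unfolding liouville_family_def
proof (elim UnE imageE)
  fix N assume "S = liouville_approx N"
  then show ?thesis using open_liouville_approx closure_liouville_approx by blast
next
  fix x assume "x \<in> {(q, p). int_vec q \<and> int_vec p \<and> (q \<noteq> 0 \<or> p \<noteq> 0)}"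
    and "S = (\<lambda>(q, p). {B. B *v q - p \<noteq> 0}) x"
  then obtain q p where "q \<noteq> 0 \<or> p \<noteq> 0" and S: "S = {B. B *v q - p \<noteq> 0}" by auto
  moreover have "open {B :: real^'n^'m. B *v q - p \<noteq> 0}"
    by (intro open_Collect_neq continuous_intros continuous_on_matrix_vector_mult)
  ultimately show ?thesis
    using closure_matrix_vector_neq by blast
qed

section \<open>Generic decompositions\<close>

instance ncpoly :: countable
  by countable_datatype

lemma open_dense_reflection:
  fixes a :: "'a::real_normed_vector"
  assumes "open S" "closure S = UNIV"
  shows "open {x. a - x \<in> S} \<and> closure {x. a - x \<in> S} = UNIV"
proof
  show "open {x. a - x \<in> S}"
    using \<open>open S\<close>
    by (intro open_vimage[of S "\<lambda>x. a - x", simplified vimage_def]) (auto intro!: continuous_intros)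
  have "x \<in> closure {x. a - x \<in> S}" for x
    unfolding closure_approachable
  proof (intro allI impI)
    fix e :: real assume "e > 0"
    then obtain y where "y \<in> S" "dist y (a - x) < e"
      using assms(2) closure_approachable by blast
    then show "\<exists>z\<in>{x. a - x \<in> S}. dist z x < e"
      by (intro bexI[of _ "a - y"]) (auto simp: dist_norm norm_minus_commute algebra_simps)
  qed
  then show "closure {x. a - x \<in> S} = UNIV" by blast
qed

lemma Inter_open_dense_nonempty:
  fixes \<G> :: "'a::{real_normed_vector, heine_borel} set set"
  assumes "countable \<G>" and "\<And>S. S \<in> \<G> \<Longrightarrow> open S \<and> closure S = UNIV"
  shows "\<Inter>\<G> \<noteq> {}"
proof -
  have "UNIV \<subseteq> closure (\<Inter>\<G>)"
    using assms by (intro Baire[OF closed_UNIV]) auto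
  then show ?thesis by auto
qed

theorem weakly_alg_indep_liouville_decomposition:
  fixes A :: "real^'n^'n"
  assumes "\<not> weakly_algebraic A"
  shows "\<exists>B C. weakly_alg_indep B C \<and> liouville_mat B \<and> liouville_mat C \<and> B + C = A"
proof -
  define \<P> where "\<P> = {P. ncvars P \<subseteq> {0, 1} \<and>
    (\<exists>C0 C1. nceval ((\<lambda>_. 0)(0 := C0, 1 := C1)) P \<noteq> (0 :: real^'n^'n))}"
  define \<G> :: "(real^'n^'n) set set" where "\<G> = liouville_family
    \<union> (\<lambda>S. {B. A - B \<in> S}) ` liouville_family \<union> (\<lambda>P. {B. nceval_split A P B \<noteq> 0}) ` \<P>"
  have "open S \<and> closure S = UNIV" if "S \<in> \<G>" for S
    using that unfolding \<G>_def
  proof (elim UnE imageE)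
    assume "S \<in> liouville_family"
    then show ?thesis by (rule open_dense_liouville_family)
  next
    fix T assume "T \<in> liouville_family" "S = {B. A - B \<in> T}"
    then show ?thesis
      using open_dense_liouville_family[of T] by (simp add: open_dense_reflection)
  next
    fix P assume "P \<in> \<P>" and S: "S = {B. nceval_split A P B \<noteq> 0}"
    then obtain C0 C1 :: "real^'n^'n" where
      vars: "ncvars P \<subseteq> {0, 1}" and nonzero: "nceval ((\<lambda>_. 0)(0 := C0, 1 := C1)) P \<noteq> 0"
      unfolding \<P>_def by blast
    obtain B1 where "nceval_split A P B1 \<noteq> 0"
      using weakly_algebraic_if_nceval_split_eq_0[OF vars nonzero] assms by blast
    then show ?thesis
      unfolding S by (intro conjI open_nceval_split_neq_0 closure_nceval_split_neq_0)
  qed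
  moreover have "countable \<G>"
  proof -
    have "countable \<P>"
      by (rule countable_subset[OF subset_UNIV]) simp
    then show ?thesis
      unfolding \<G>_def by (intro countable_Un countable_image countable_liouville_family)
  qed
  ultimately have "\<Inter>\<G> \<noteq> {}"
    by (rule Inter_open_dense_nonempty[rotated])
  then obtain B where B: "B \<in> \<Inter>\<G>" by blast
  have "liouville_mat B" "liouville_mat (A - B)"
    unfolding liouville_mat_iff_Inter_liouville_family using B by (auto simp: \<G>_def)
  moreover have "weakly_alg_indep B (A - B)"
    unfolding weakly_alg_indep_def
  proof (intro allI impI)
    fix P and C0 C1 :: "real^'n^'n"
    assume vars: "ncvars P \<subseteq> {0, 1}" and "nceval ((\<lambda>_. 0)(0 := B, 1 := A - B)) P = 0"
    then have "B \<notin> {B. nceval_split A P B \<noteq> 0}"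
      by (simp add: nceval_split_def)
    with B have "P \<notin> \<P>"
      unfolding \<G>_def by blast
    with vars show "nceval ((\<lambda>_. 0)(0 := C0, 1 := C1)) P = 0"
      by (auto simp: \<P>_def)
  qed
  ultimately show ?thesis
    by (intro exI[of _ B] exI[of _ "A - B"]) simp
qed

theorem theorem7:
  fixes A :: "real^'n^'n"
  shows "((\<exists>B C. weakly_alg_indep B C \<and> A = B + C) \<longrightarrow> transcendental_mat A) \<and>
         (\<not> weakly_algebraic A \<longrightarrow>
            (\<exists>B C. weakly_alg_indep B C \<and> liouville_mat B \<and> liouville_mat C \<and> B + C = A))"
  using transcendental_mat_sum_weakly_alg_indep weakly_alg_indep_liouville_decomposition by blast

end
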